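(* For all $v,r,t\in\mathbb{R}$, $$|v|+|r-v|+|r+t-v|-|t-v|+|r-t|-|t|\geq\max\left(|r|,\,|v|-|r|\right).$$ *)

theory Defs
  imports Complex_Main
begin

end

theory Submission
  imports Defs
begin

lemma abs_sum_ge_abs_left:
  fixes v r t :: real
  shows "\<bar>r\<bar> \<le> \<bar>v\<bar> + \<bar>r - v\<bar> + \<bar>r + t - v\<bar> - \<bar>t - v\<bar> + \<bar>r - t\<bar> - \<bar>t\<bar>"
  by (simp add: abs_if split: if_splits; linarith)

lemma abs_sum_ge_abs_diff:
  fixes v r t :: real
  shows "\<bar>v\<bar> - \<bar>r\<bar> \<le> \<bar>v\<bar> + \<bar>r - v\<bar> + \<bar>r + t - v\<bar> - \<bar>t - v\<bar> + \<bar>r - t\<bar> - \<bar>t\<bar>"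
  by (simp add: abs_if split: if_splits; linarith)

theorem lemma2p2p5:
  fixes v r t :: real
  shows "\<bar>v\<bar> + \<bar>r - v\<bar> + \<bar>r + t - v\<bar> - \<bar>t - v\<bar> + \<bar>r - t\<bar> - \<bar>t\<bar> \<ge> max \<bar>r\<bar> (\<bar>v\<bar> - \<bar>r\<bar>)"
  using abs_sum_ge_abs_left abs_sum_ge_abs_diff by (rule max.boundedI)

end
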